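(* Let $x_0\in\mathbb{R}$. If $\liminf_{n\to\infty}\big(p_n(x_0)^2+p_{n+1}(x_0)^2\big)^{1/n}>1$, then $\displaystyle \frac{p_n(x_0)^2}{K_n(x_0,x_0)}$ does not tend to $0$ as $n\to\infty$.
   Context: Let $\rho$ be a probability measure on $\mathbb{R}$ with compact but infinite support, $p_n$ ($n\ge0$) its orthonormal polynomials (real coefficients, positive leading coefficient, $p_0=1$), and $K_n(x,y)=\sum_{j=0}^n p_j(x)p_j(y)$. *)

theory Defs
  imports "HOL-Probability.Probability" "HOL-Computational_Algebra.Polynomial"
begin

definition measure_support :: "real measure \<Rightarrow> real set" where
  "measure_support M = {x. \<forall>e>0. emeasure M (ball x e) > 0}"

definition orthonormal_polys :: "real measure \<Rightarrow> (nat \<Rightarrow> real poly) \<Rightarrow> bool" where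
  "orthonormal_polys M p \<longleftrightarrow>
     (\<forall>n. degree (p n) = n \<and> lead_coeff (p n) > 0) \<and>
     (\<forall>i j. (\<integral>x. poly (p i) x * poly (p j) x \<partial>M) = (if i = j then 1 else 0))"

definition christoffel_darboux_kernel :: "(nat \<Rightarrow> real poly) \<Rightarrow> nat \<Rightarrow> real \<Rightarrow> real \<Rightarrow> real" where
  "christoffel_darboux_kernel p n x y = (\<Sum>j\<le>n. poly (p j) x * poly (p j) y)"

end

theory Submission
  imports Defs
begin

(* Write a n = p_n(x0)^2 >= 0, so that K_n(x0,x0) is the partial sum
   S n = a 0 + ... + a n.  If a n / S n -> 0, then eventually a (n+1) <= d * S (n+1)
   for any fixed d in (0,1), i.e. S (n+1) <= r * S n with r = 1/(1-d) > 1 arbitrary: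
   the partial sums grow subexponentially.  On the other hand the liminf hypothesis
   yields some c > 1 with a n + a (n+1) > c^n eventually, and a n + a (n+1) <= S (n+1).
   Choosing 1 < r < c gives c^n <= B * r^n eventually, which is absurd. *)

lemma eventually_geometric_bound:
  fixes f :: "nat \<Rightarrow> real" and r :: real
  assumes r: "r > 0"
    and ratio: "eventually (\<lambda>n. f (Suc n) \<le> r * f n) sequentially"
  shows "\<exists>B. eventually (\<lambda>n. f n \<le> B * r ^ n) sequentially"
proof -
  from ratio obtain N where N: "\<And>n. n \<ge> N \<Longrightarrow> f (Suc n) \<le> r * f n"
    by (auto simp: eventually_sequentially)
  have growth: "f (N + k) \<le> f N * r ^ k" for k
  proof (induction k)
    case 0
    show ?case by simp
  next
    case (Suc k)
    have "f (N + Suc k) \<le> r * f (N + k)" using N[of "N + k"] by simp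
    also have "\<dots> \<le> r * (f N * r ^ k)" using Suc r by simp
    finally show ?case by (simp add: algebra_simps)
  qed
  have "f n \<le> (f N / r ^ N) * r ^ n" if "n \<ge> N" for n
  proof -
    have "f n \<le> f N * r ^ (n - N)" using growth[of "n - N"] that by simp
    also have "r ^ (n - N) = r ^ n / r ^ N" using that r by (simp add: power_diff)
    finally show ?thesis by simp
  qed
  then have "eventually (\<lambda>n. f n \<le> (f N / r ^ N) * r ^ n) sequentially"
    unfolding eventually_sequentially by blast
  then show ?thesis by blast
qed

lemma partial_sums_subexponential:
  fixes a :: "nat \<Rightarrow> real" and r :: real
  assumes nonneg: "\<And>n. a n \<ge> 0"
    and negligible: "(\<lambda>n. a n / (\<Sum>j\<le>n. a j)) \<longlonglongrightarrow> 0"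
    and r: "r > 1"
  shows "\<exists>B. eventually (\<lambda>n. (\<Sum>j\<le>n. a j) \<le> B * r ^ n) sequentially"
proof -
  define S where "S n = (\<Sum>j\<le>n. a j)" for n
  define d where "d = 1 - 1 / r"
  have d: "0 < d" using r by (simp add: d_def)
  have term_le_sum: "a n \<le> S n" for n
    unfolding S_def using nonneg by (intro member_le_sum) auto
  have small: "eventually (\<lambda>n. \<bar>a n / S n\<bar> < d) sequentially"
    using negligible d unfolding S_def LIMSEQ_iff by (simp add: eventually_sequentially)
  have "eventually (\<lambda>n. a n \<le> d * S n) sequentially"
    using small
  proof eventually_elim
    case (elim n)
    show ?case
    proof (cases "S n = 0")
      case True
      then show ?thesis using term_le_sum[of n] nonneg[of n] by simp
    next
      case False
      then have "S n > 0" using term_le_sum[of n] nonneg[of n] by linarith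
      then show ?thesis using elim nonneg[of n] by (simp add: field_simps)
    qed
  qed
  then have "eventually (\<lambda>n. a (Suc n) \<le> d * S (Suc n)) sequentially"
    by (rule eventually_sequentially_Suc[THEN iffD2])
  then have "eventually (\<lambda>n. S (Suc n) \<le> r * S n) sequentially"
  proof eventually_elim
    case (elim n)
    have "S (Suc n) = S n + a (Suc n)" by (simp add: S_def)
    with elim have "S (Suc n) / r \<le> S n"
      by (simp add: d_def algebra_simps add_divide_distrib)
    then show ?case using r by (simp add: field_simps)
  qed
  then show ?thesis
    using eventually_geometric_bound[of r S] r unfolding S_def by simp
qed

lemma exponential_lower_bound_from_liminf_root:
  fixes x :: "nat \<Rightarrow> real"
  assumes nonneg: "\<And>n. x n \<ge> 0"
    and liminf: "liminf (\<lambda>n. ereal (x n powr (1 / real n))) > 1"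
  shows "\<exists>c>1. eventually (\<lambda>n. c ^ n < x n) sequentially"
proof -
  obtain c where c1: "1 < ereal c" and c_lt: "ereal c < liminf (\<lambda>n. ereal (x n powr (1 / real n)))"
    using liminf ereal_dense2 by blast
  have c: "c > 1" using c1 by simp
  have "eventually (\<lambda>n. c < x n powr (1 / real n)) sequentially"
    using less_LiminfD[OF c_lt] by simp
  then have "eventually (\<lambda>n. c ^ n < x n) sequentially"
    using eventually_gt_at_top[of 0]
  proof eventually_elim
    case (elim n)
    have "x n \<noteq> 0" using elim c by auto
    then have pos: "x n > 0" using nonneg[of n] by simp
    have "c ^ n < (x n powr (1 / real n)) ^ n"
      using elim c by (intro power_strict_mono) auto
    also have "\<dots> = x n"
      using pos elim(2) by (simp add: powr_realpow[symmetric] powr_powr)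
    finally show ?case .
  qed
  then show ?thesis using c by blast
qed

lemma exponential_growth_incompatible:
  fixes f :: "nat \<Rightarrow> real" and B c r :: real
  assumes r: "0 < r" "r < c"
    and lower: "eventually (\<lambda>n. c ^ n < f n) sequentially"
    and upper: "eventually (\<lambda>n. f n \<le> B * r ^ n) sequentially"
  shows False
proof -
  have cr: "1 < c / r" using r by simp
  obtain m where m: "B < (c / r) ^ m" using real_arch_pow[OF cr] by blast
  have "eventually (\<lambda>n. n \<ge> m) sequentially" by (simp add: eventually_ge_at_top)
  with lower upper have "eventually (\<lambda>_. False) sequentially"
  proof eventually_elim
    case (elim n)
    have "(c / r) ^ m \<le> (c / r) ^ n" using cr elim(3) by (intro power_increasing) auto
    with m have "B < (c / r) ^ n" by linarith
    then have "B * r ^ n < (c / r) ^ n * r ^ n" using r by simp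
    also have "\<dots> = c ^ n" using r by (simp add: power_divide)
    finally show False using elim(1,2) by simp
  qed
  then show False by simp
qed

theorem theorem3p2:
  fixes M :: "real measure" and p :: "nat \<Rightarrow> real poly" and x0 :: real
  assumes "prob_space M"
    and "sets M = sets borel"
    and "compact (measure_support M)"
    and "infinite (measure_support M)"
    and "orthonormal_polys M p"
    and "liminf (\<lambda>n. ereal (((poly (p n) x0)\<^sup>2 + (poly (p (Suc n)) x0)\<^sup>2) powr (1 / real n))) > 1"
  shows "\<not> ((\<lambda>n. (poly (p n) x0)\<^sup>2 / christoffel_darboux_kernel p n x0 x0) \<longlonglongrightarrow> 0)"
proof
  define a where "a n = (poly (p n) x0)\<^sup>2" for n
  assume "(\<lambda>n. (poly (p n) x0)\<^sup>2 / christoffel_darboux_kernel p n x0 x0) \<longlonglongrightarrow> 0"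
  then have negligible: "(\<lambda>n. a n / (\<Sum>j\<le>n. a j)) \<longlonglongrightarrow> 0"
    by (simp add: a_def christoffel_darboux_kernel_def power2_eq_square)
  have nonneg: "a n \<ge> 0" for n by (simp add: a_def)
  obtain c where c: "c > 1" and lower: "eventually (\<lambda>n. c ^ n < a n + a (Suc n)) sequentially"
    using exponential_lower_bound_from_liminf_root[of "\<lambda>n. a n + a (Suc n)"] assms(6) nonneg
    unfolding a_def by (auto intro: add_nonneg_nonneg)
  define r where "r = (1 + c) / 2"
  have r: "1 < r" "r < c" using c by (auto simp: r_def)
  obtain B where "eventually (\<lambda>n. (\<Sum>j\<le>n. a j) \<le> B * r ^ n) sequentially"
    using partial_sums_subexponential[OF nonneg negligible r(1)] by blast
  then have "eventually (\<lambda>n. (\<Sum>j\<le>Suc n. a j) \<le> B * r ^ Suc n) sequentially"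
    by (rule eventually_sequentially_Suc[THEN iffD2])
  then have "eventually (\<lambda>n. a n + a (Suc n) \<le> (B * r) * r ^ n) sequentially"
  proof eventually_elim
    case (elim n)
    have "a n \<le> (\<Sum>j\<le>n. a j)" using nonneg by (intro member_le_sum) auto
    then show ?case using elim by (simp add: algebra_simps)
  qed
  then show False using exponential_growth_incompatible[OF _ r(2) lower] r(1) by simp
qed

end
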